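(* Let $G$ be a graph and let $G_r$ be the reduced graph of $G$. Then $box(G)\leq |V(G_r)|$.
   Context: All graphs are simple, finite and undirected. For a graph $G$, define $x\sim_G y$ iff $N(x)=N(y)$ (equal open neighbourhoods); this is an equivalence relation and $[x]$ denotes the class of $x$. The reduced graph $G_r$ has the equivalence classes as vertices, with distinct classes $[x]$ and $[y]$ adjacent iff $x$ and $y$ are adjacent in $G$. The boxicity $box(G)$ is the least positive integer $\ell$ such that $G$ is isomorphic to the intersection graph of a family of $\ell$-boxes (Cartesian products of $\ell$ closed bounded real intervals). *)

theory Defs
  imports Main "HOL-Analysis.Analysis"
begin

definition simple_graph :: "'a set \<Rightarrow> ('a \<Rightarrow> 'a \<Rightarrow> bool) \<Rightarrow> bool" where
  "simple_graph V E \<longleftrightarrow> finite V \<and> (\<forall>x y. E x y \<longrightarrow> x \<in> V \<and> y \<in> V)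
     \<and> (\<forall>x y. E x y \<longrightarrow> E y x) \<and> (\<forall>x. \<not> E x x)"

definition nbhd :: "'a set \<Rightarrow> ('a \<Rightarrow> 'a \<Rightarrow> bool) \<Rightarrow> 'a \<Rightarrow> 'a set" where
  "nbhd V E x = {y \<in> V. E x y}"

definition reduced_vertices :: "'a set \<Rightarrow> ('a \<Rightarrow> 'a \<Rightarrow> bool) \<Rightarrow> 'a set set" where
  "reduced_vertices V E = (\<lambda>x. {y \<in> V. nbhd V E y = nbhd V E x}) ` V"

definition is_box :: "nat \<Rightarrow> (nat \<Rightarrow> real set) \<Rightarrow> bool" where
  "is_box l B \<longleftrightarrow> (\<forall>i<l. \<exists>a b. a \<le> b \<and> B i = {a..b})"

definition boxes_intersect :: "nat \<Rightarrow> (nat \<Rightarrow> real set) \<Rightarrow> (nat \<Rightarrow> real set) \<Rightarrow> bool" where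
  "boxes_intersect l B C \<longleftrightarrow> (\<forall>i<l. B i \<inter> C i \<noteq> {})"

definition box_representable :: "'a set \<Rightarrow> ('a \<Rightarrow> 'a \<Rightarrow> bool) \<Rightarrow> nat \<Rightarrow> bool" where
  "box_representable V E l \<longleftrightarrow> (\<exists>f :: 'a \<Rightarrow> nat \<Rightarrow> real set.
      (\<forall>v\<in>V. is_box l (f v)) \<and>
      (\<forall>u\<in>V. \<forall>v\<in>V. u \<noteq> v \<longrightarrow> (E u v \<longleftrightarrow> boxes_intersect l (f u) (f v))))"

definition boxicity :: "'a set \<Rightarrow> ('a \<Rightarrow> 'a \<Rightarrow> bool) \<Rightarrow> nat" where
  "boxicity V E = (LEAST l. 0 < l \<and> box_representable V E l)"

end

theory Submission
  imports Defs
begin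

text \<open>Enumerate the twin classes as \<open>C\<^sub>0, \<dots>, C\<^sub>k\<^sub>-\<^sub>1\<close> and give the vertices
  distinct positions in \<open>[1, M]\<close>. In coordinate \<open>i\<close>, a vertex of \<open>C\<^sub>i\<close> gets the
  point at its position, a neighbour of \<open>C\<^sub>i\<close> the interval \<open>[0, M]\<close>, and every other
  vertex \<open>[-1, 0]\<close>. Vertices of one class have the same neighbours and hence, the
  graph being loopless, are never adjacent to each other; so two distinct vertices
  are adjacent iff their boxes meet in every coordinate: coordinate \<open>i\<close> separates a
  non-adjacent pair whenever the first vertex lies in \<open>C\<^sub>i\<close>.\<close>

lemma twins_not_adjacent:
  assumes "simple_graph V E" and "nbhd V E u = nbhd V E v"
  shows "\<not> E u v"
proof
  assume "E u v"
  then have "v \<in> nbhd V E u"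
    using assms(1) unfolding simple_graph_def nbhd_def by auto
  then have "E v v"
    using assms(2) unfolding nbhd_def by simp
  then show False
    using assms(1) unfolding simple_graph_def by blast
qed

lemma twin_adjacent:
  assumes "simple_graph V E" and "nbhd V E u = nbhd V E w" and "E w v"
  shows "E u v"
proof -
  have "v \<in> nbhd V E w"
    using assms(1,3) unfolding simple_graph_def nbhd_def by auto
  then have "v \<in> nbhd V E u"
    using assms(2) by simp
  then show ?thesis
    unfolding nbhd_def by simp
qed

definition twin_cover_box ::
    "('a \<Rightarrow> 'a \<Rightarrow> bool) \<Rightarrow> (nat \<Rightarrow> 'a set) \<Rightarrow> ('a \<Rightarrow> real) \<Rightarrow> real \<Rightarrow> 'a \<Rightarrow> nat \<Rightarrow> real set"
  where "twin_cover_box E C p M v i =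
    (if v \<in> C i then {p v..p v} else if \<exists>w\<in>C i. E v w then {0..M} else {-1..0})"

lemma is_box_twin_cover_box:
  assumes "0 \<le> M"
  shows "is_box k (twin_cover_box E C p M v)"
proof -
  have interval: "\<exists>a b. a \<le> b \<and> {c..d} = {a..b}" if "c \<le> d" for c d :: real
    using that by blast
  have "\<exists>a b. a \<le> b \<and> twin_cover_box E C p M v i = {a..b}" for i
    using assms interval[of "p v" "p v"] interval[of 0 M] interval[of "-1" 0]
    unfolding twin_cover_box_def by simp
  then show ?thesis
    unfolding is_box_def by blast
qed

locale twin_cover =
  fixes V :: "'a set" and E :: "'a \<Rightarrow> 'a \<Rightarrow> bool" and C :: "nat \<Rightarrow> 'a set" and k :: nat
    and p :: "'a \<Rightarrow> real" and M :: real
  assumes graph: "simple_graph V E"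
    and cover: "V \<subseteq> (\<Union>i<k. C i)"
    and twins: "\<And>i u v. i < k \<Longrightarrow> u \<in> C i \<Longrightarrow> v \<in> C i \<Longrightarrow> nbhd V E u = nbhd V E v"
    and positions_inj: "inj_on p V"
    and positions_range: "\<And>v. v \<in> V \<Longrightarrow> 0 < p v \<and> p v \<le> M"
begin

abbreviation box :: "'a \<Rightarrow> nat \<Rightarrow> real set" where
  "box \<equiv> twin_cover_box E C p M"

lemma adjacent_imp_boxes_intersect:
  assumes "E u v"
  shows "boxes_intersect k (box u) (box v)"
  unfolding boxes_intersect_def
proof (intro allI impI)
  fix i assume "i < k"
  have "u \<in> V" "v \<in> V"
    using graph assms unfolding simple_graph_def by auto
  have "E v u"
    using graph assms unfolding simple_graph_def by blast
  have not_both: "\<not> (u \<in> C i \<and> v \<in> C i)"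
    using twins[OF \<open>i < k\<close>] twins_not_adjacent[OF graph] assms by blast
  consider "u \<in> C i" | "v \<in> C i" | "u \<notin> C i" "v \<notin> C i"
    by blast
  then show "box u i \<inter> box v i \<noteq> {}"
  proof cases
    case 1
    then have "p u \<in> box u i \<inter> box v i"
      using not_both \<open>E v u\<close> positions_range[OF \<open>u \<in> V\<close>] unfolding twin_cover_box_def by auto
    then show ?thesis by blast
  next
    case 2
    then have "p v \<in> box u i \<inter> box v i"
      using not_both assms positions_range[OF \<open>v \<in> V\<close>] unfolding twin_cover_box_def by auto
    then show ?thesis by blast
  next
    case 3
    have "0 \<le> M"
      using positions_range[OF \<open>u \<in> V\<close>] by linarith
    with 3 have "0 \<in> box u i \<inter> box v i"
      unfolding twin_cover_box_def by auto
    then show ?thesis by blast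
  qed
qed

lemma boxes_intersect_imp_adjacent:
  assumes "u \<in> V" "v \<in> V" "u \<noteq> v" and "boxes_intersect k (box u) (box v)"
  shows "E u v"
proof (rule ccontr)
  assume "\<not> E u v"
  obtain i where "i < k" "u \<in> C i"
    using cover assms(1) by blast
  have "box u i \<inter> box v i = {}"
  proof (cases "v \<in> C i")
    case True
    have "p u \<noteq> p v"
      using positions_inj assms(1-3) unfolding inj_on_def by blast
    with True \<open>u \<in> C i\<close> show ?thesis
      unfolding twin_cover_box_def by auto
  next
    case False
    have "\<not> E v w" if "w \<in> C i" for w
      using twin_adjacent[OF graph twins[OF \<open>i < k\<close> \<open>u \<in> C i\<close> that]] \<open>\<not> E u v\<close> graph
      unfolding simple_graph_def by blast
    with False \<open>u \<in> C i\<close> positions_range[OF assms(1)] show ?thesis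
      unfolding twin_cover_box_def by auto
  qed
  then show False
    using assms(4) \<open>i < k\<close> unfolding boxes_intersect_def by blast
qed

lemma box_representable: "box_representable V E k"
  unfolding box_representable_def
proof (intro exI[of _ box] conjI ballI impI)
  fix v assume "v \<in> V"
  then have "0 \<le> M"
    using positions_range[of v] by linarith
  then show "is_box k (box v)"
    by (rule is_box_twin_cover_box)
next
  fix u v assume "u \<in> V" "v \<in> V" "u \<noteq> v"
  then show "E u v \<longleftrightarrow> boxes_intersect k (box u) (box v)"
    using adjacent_imp_boxes_intersect boxes_intersect_imp_adjacent by blast
qed

end

lemma box_representable_twin_cover:
  assumes "simple_graph V E" and "V \<subseteq> (\<Union>i<k. C i)"
    and "\<And>i u v. i < k \<Longrightarrow> u \<in> C i \<Longrightarrow> v \<in> C i \<Longrightarrow> nbhd V E u = nbhd V E v"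
  shows "box_representable V E k"
proof -
  obtain idx where idx: "bij_betw idx V {0..<card V}"
    using assms(1) ex_bij_betw_finite_nat unfolding simple_graph_def by blast
  define p where "p v = real (idx v) + 1" for v
  have "inj_on p V"
    using idx unfolding bij_betw_def inj_on_def p_def by simp
  moreover have "0 < p v \<and> p v \<le> real (card V)" if "v \<in> V" for v
    using bij_betwE[OF idx] that unfolding p_def by fastforce
  ultimately interpret twin_cover V E C k p "real (card V)"
    by (intro twin_cover.intro assms)
  show ?thesis
    by (rule box_representable)
qed

lemma boxicity_le:
  assumes "0 < l" and "box_representable V E l"
  shows "boxicity V E \<le> l"
  unfolding boxicity_def using assms by (blast intro: Least_le)

lemma box_representable_card_reduced_vertices:
  assumes "simple_graph V E"
  shows "box_representable V E (card (reduced_vertices V E))"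
proof -
  let ?R = "reduced_vertices V E"
  have "finite ?R"
    using assms unfolding simple_graph_def reduced_vertices_def by simp
  then obtain C where C: "bij_betw C {0..<card ?R} ?R"
    using ex_bij_betw_nat_finite by blast
  have "V \<subseteq> (\<Union>i<card ?R. C i)"
  proof
    fix v assume "v \<in> V"
    then have "{y \<in> V. nbhd V E y = nbhd V E v} \<in> C ` {0..<card ?R}"
      using bij_betw_imp_surj_on[OF C] unfolding reduced_vertices_def by blast
    then show "v \<in> (\<Union>i<card ?R. C i)"
      using \<open>v \<in> V\<close> by auto
  qed
  moreover have "nbhd V E u = nbhd V E v" if "i < card ?R" "u \<in> C i" "v \<in> C i" for i u v
  proof -
    have "C i \<in> ?R"
      using bij_betwE[OF C] that(1) by simp
    then obtain x where "C i = {y \<in> V. nbhd V E y = nbhd V E x}"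
      unfolding reduced_vertices_def by blast
    with that(2,3) show ?thesis
      by simp
  qed
  ultimately show ?thesis
    using assms by (blast intro: box_representable_twin_cover)
qed

theorem corollary3p2:
  fixes V :: "'a set" and E :: "'a \<Rightarrow> 'a \<Rightarrow> bool"
  assumes "simple_graph V E" and "V \<noteq> {}"
  shows "boxicity V E \<le> card (reduced_vertices V E)"
proof (rule boxicity_le)
  have "finite (reduced_vertices V E)" and "reduced_vertices V E \<noteq> {}"
    using assms unfolding simple_graph_def reduced_vertices_def by simp_all
  then show "0 < card (reduced_vertices V E)"
    by (simp add: card_gt_0_iff)
  show "box_representable V E (card (reduced_vertices V E))"
    using assms(1) by (rule box_representable_card_reduced_vertices)
qed

end
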